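(* Consider the corrupted Lipschitz contextual search problem with pricing loss described in the context, and let the learner run Algorithm 3 (described in the context) with discretization parameter $\eta_0=T^{-1/(d+1)}$ and agnostic-check schedule $\tau_0\ge 1$. Then for any unknown corruption budget $C$ (and every $L$-Lipschitz $f$, context sequence and adaptive corruption strategy with at most $C$ corrupted rounds), the total pricing loss is at most \[ L\cdot O\big(C\log T + T^{d/(d+1)}\log T + C\tau_0 + T/\tau_0\big). \] In particular, with $\tau_0=T^{1/(d+1)}$, the total pricing loss is at most $L\cdot \widetilde{O}\big(T^{d/(d+1)} + C\cdot T^{1/(d+1)}\big)$, where $\widetilde O$ hides logarithmic factors in $T$.
   Context: Problem. Fix $L>0$, $d\ge 1$, horizon $T\ge 2$. An adversary fixes an unknown $f:[0,1]^d\to[0,L]$ with $|f(x)-f(y)|\le L\|x-y\|_\infty$. In each round $t=1,\dots,T$: the adversary chooses $x_t\in[0,1]^d$; the learner observes $x_t$ and posts a guess (price) $q_t$; the adversary observes $q_t$ and sends $\sigma_t\in\{0,1\}$. With $\sigma(u)=1$ if $u>0$, $0$ if $u\le 0$: in uncorrupted rounds $\sigma_t=\sigma(q_t-f(x_t))$, in corrupted rounds $\sigma_t=1-\sigma(q_t-f(x_t))$; the adversary chooses adaptively (after seeing $q_t$) which rounds to corrupt, with at most $C$ corrupted rounds, $C$ unknown to the learner. The (unobserved) pricing loss of round $t$ is $\ell(q_t,f(x_t))=f(x_t)-q_t\cdot\mathbb{1}[q_t\le f(x_t)]$. $\mathtt{len}$ denotes length of an interval and side length of a hypercube. Subroutine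 $\mathtt{MidpointQuery}(I,Y)$, $Y=[a,b]$: guess $q=(a+b)/2$; if $\sigma_t=1$ return $Y\cap[0,q+L\,\mathtt{len}(I)]$, if $\sigma_t=0$ return $Y\cap[q-L\,\mathtt{len}(I),\infty)$. Algorithm 3. The learner uniformly partitions $[0,1]^d$ into hypercubes of side length $\Theta(\eta_0)$. Each hypercube $I_j$ has an associated range $Y_j$ (initially $[0,L]$) and a counter $c_j$ (initially $0$). In round $t$, let $I_j$ be the hypercube containing $x_t$. If $\mathtt{len}(Y_j)<10L\eta_0$ ($I_j$ is "pricing-ready"): set $c_j:=c_j+1$; if $c_j>\tau_0$, guess $\max(Y_j)$ (a "checking round") and set $c_j:=0$; otherwise guess $\min(Y_j)$ (a "pricing round"). The learner is "surprised" if in a checking round it receives $\sigma_t=0$ or in a pricing round it receives $\sigma_t=1$; when surprised it sets $Y_j:=[0,L]$ and $c_j:=0$. If $I_j$ is not pricing-ready, it performs a "searching round" $Y_j:=\mathtt{MidpointQuery}(I_j,Y_j)$. *)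

theory Defs
  imports "HOL-Analysis.Analysis"
begin

text \<open>Contexts are points of [0,1]^d, represented as vectors of type real^'d with d = CARD('d).\<close>

definition unit_cube :: "(real^'d) set" where
  "unit_cube = {x. \<forall>j. 0 \<le> x $ j \<and> x $ j \<le> 1}"

definition dist_inf :: "real^'d \<Rightarrow> real^'d \<Rightarrow> real" where
  "dist_inf x y = Max (range (\<lambda>j. \<bar>x $ j - y $ j\<bar>))"

definition lipschitz_target :: "real \<Rightarrow> (real^'d \<Rightarrow> real) \<Rightarrow> bool" where
  "lipschitz_target L f \<longleftrightarrow>
     (\<forall>x\<in>unit_cube. 0 \<le> f x \<and> f x \<le> L) \<and>
     (\<forall>x\<in>unit_cube. \<forall>y\<in>unit_cube. \<bar>f x - f y\<bar> \<le> L * dist_inf x y)"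

text \<open>sigma(u) = 1 iff u > 0 (booleans encode {0,1}).\<close>
definition sgn01 :: "real \<Rightarrow> bool" where
  "sgn01 u \<longleftrightarrow> u > 0"

definition feedback :: "(real^'d \<Rightarrow> real) \<Rightarrow> real^'d \<Rightarrow> bool \<Rightarrow> real \<Rightarrow> bool" where
  "feedback f x corrupted q = (if corrupted then \<not> sgn01 (q - f x) else sgn01 (q - f x))"

definition pricing_loss :: "real \<Rightarrow> real \<Rightarrow> real" where
  "pricing_loss q v = v - (if q \<le> v then q else 0)"

text \<open>Uniform partition of [0,1]^d into N^d hypercubes of side 1/N; a cube is indexed by
  its integer coordinates (0..N-1 in each direction).\<close>
definition cell :: "nat \<Rightarrow> real^'d \<Rightarrow> nat^'d" where
  "cell N x = (\<chi> j. min (N - 1) (nat \<lfloor>x $ j * real N\<rfloor>))"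

text \<open>Algorithm state: for each hypercube its range Y_j = [a,b] (stored as (a,b)) and its counter c_j.\<close>
type_synonym 'd alg_state = "(nat^'d \<Rightarrow> real \<times> real) \<times> (nat^'d \<Rightarrow> nat)"

definition alg_init :: "real \<Rightarrow> 'd alg_state" where
  "alg_init L = ((\<lambda>_. (0, L)), (\<lambda>_. 0))"

definition alg_guess :: "real \<Rightarrow> real \<Rightarrow> real \<Rightarrow> nat \<Rightarrow> 'd alg_state \<Rightarrow> real^'d \<Rightarrow> real" where
  "alg_guess L eta0 tau0 N st x =
     (let j = cell N x; a = fst (fst st j); b = snd (fst st j) in
      if b - a < 10 * L * eta0 then
        (if real (snd st j + 1) > tau0 then b else a)
      else (a + b) / 2)"

definition alg_update :: "real \<Rightarrow> real \<Rightarrow> real \<Rightarrow> nat \<Rightarrow> 'd alg_state \<Rightarrow> real^'d \<Rightarrow> bool \<Rightarrow> 'd alg_state" where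
  "alg_update L eta0 tau0 N st x s =
     (let j = cell N x; Y = fst st; c = snd st; a = fst (Y j); b = snd (Y j);
          len = 1 / real N in
      if b - a < 10 * L * eta0 then
        (if real (c j + 1) > tau0 then
           \<comment> \<open>checking round: guess max Y_j, counter reset; surprised iff s = 0\<close>
           (if \<not> s then (Y(j := (0, L)), c(j := 0)) else (Y, c(j := 0)))
         else
           \<comment> \<open>pricing round: guess min Y_j; surprised iff s = 1\<close>
           (if s then (Y(j := (0, L)), c(j := 0)) else (Y, c(j := c j + 1))))
      else
        \<comment> \<open>searching round: MidpointQuery(I_j, Y_j)\<close>
        (let q = (a + b) / 2 in
         if s then (Y(j := (max a 0, min b (q + L * len))), c)
         else (Y(j := (max a (q - L * len), b)), c)))"

text \<open>State of the algorithm before round t (rounds are numbered 0,1,...,T-1), when facing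
  target f, contexts xs and corruption pattern cor (cor t = round t is corrupted).\<close>
primrec alg_run :: "real \<Rightarrow> real \<Rightarrow> real \<Rightarrow> nat \<Rightarrow> (real^'d \<Rightarrow> real) \<Rightarrow> (nat \<Rightarrow> real^'d)
                     \<Rightarrow> (nat \<Rightarrow> bool) \<Rightarrow> nat \<Rightarrow> 'd alg_state" where
  "alg_run L eta0 tau0 N f xs cor 0 = alg_init L"
| "alg_run L eta0 tau0 N f xs cor (Suc t) =
     (let st = alg_run L eta0 tau0 N f xs cor t;
          q = alg_guess L eta0 tau0 N st (xs t)
      in alg_update L eta0 tau0 N st (xs t) (feedback f (xs t) (cor t) q))"

text \<open>Algorithm 3's parameters for horizon T: eta0 = T^(-1/(d+1)), cubes of side 1/N with
  N = ceil(1/eta0), so that side length is Theta(eta0).\<close>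
definition eta0_of :: "nat \<Rightarrow> nat \<Rightarrow> real" where
  "eta0_of d T = real T powr (- 1 / (real d + 1))"

definition N_of :: "nat \<Rightarrow> nat \<Rightarrow> nat" where
  "N_of d T = nat \<lceil>1 / eta0_of d T\<rceil>"

definition total_loss :: "real \<Rightarrow> nat \<Rightarrow> real \<Rightarrow> (real^'d \<Rightarrow> real) \<Rightarrow> (nat \<Rightarrow> real^'d)
                          \<Rightarrow> (nat \<Rightarrow> bool) \<Rightarrow> real" where
  "total_loss L T tau0 f xs cor =
     (let d = CARD('d); eta0 = eta0_of d T; N = N_of d T in
      \<Sum>t<T. pricing_loss (alg_guess L eta0 tau0 N (alg_run L eta0 tau0 N f xs cor t) (xs t))
                          (f (xs t)))"

end

(* An amortized potential argument. Each hypercube carries a potential determined by its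
   range [a,b] and its counter c. Since f varies by at most L/N <= L eta0 on a hypercube, a
   MidpointQuery on a range of length >= 10 L eta0 shrinks it to at most 3/5 of its length,
   and a pricing round on a pricing-ready range loses at most 11 L eta0 unless f lies above
   the whole range on that hypercube. Hence in an uncorrupted round the loss plus the increase
   of the total potential is at most L (11 eta0 + 6 / tau0), while a corrupted round costs at
   most the maximal potential of a hypercube, O(L (log T + tau0)). The initial potential is
   O(L log T) for each of the at most (2 T^(1/(d+1)))^d hypercubes, and summing over the T
   rounds gives the bound. *)

theory Submission
  imports Defs
begin

lemma pricing_loss_le: "0 \<le> q \<Longrightarrow> v \<le> M \<Longrightarrow> pricing_loss q v \<le> M"
  unfolding pricing_loss_def by auto

lemma sum_if_le_card:
  fixes A B :: real
  assumes "0 \<le> A" "0 \<le> B" "card {t. t < n \<and> P t} \<le> C"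
  shows "(\<Sum>t<n. if P t then A else B) \<le> real n * B + real C * A"
proof -
  have "(\<Sum>t<n. if P t then A else B) \<le> (\<Sum>t<n. B + (if P t then A else 0))"
    using assms(2) by (intro sum_mono) auto
  also have "\<dots> = real n * B + real (card {t. t < n \<and> P t}) * A"
    by (simp add: sum.distrib sum.If_cases lessThan_def Collect_conj_eq Int_commute)
  also have "\<dots> \<le> real n * B + real C * A"
    using assms(1,3) by (simp add: mult_right_mono)
  finally show ?thesis .
qed

section \<open>Hypercubes of the partition\<close>

lemma cell_index_bounds:
  fixes w :: real
  assumes "1 \<le> N" "0 \<le> w" "w \<le> 1"
  shows "real (min (N - 1) (nat \<lfloor>w * real N\<rfloor>)) \<le> w * real N \<and>
         w * real N \<le> real (min (N - 1) (nat \<lfloor>w * real N\<rfloor>)) + 1"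
proof -
  have wN: "0 \<le> w * real N" "w * real N \<le> real N"
    using assms(2,3) by (simp_all add: mult_left_le_one_le)
  show ?thesis
  proof (cases "nat \<lfloor>w * real N\<rfloor> \<le> N - 1")
    case True
    then have "real (min (N - 1) (nat \<lfloor>w * real N\<rfloor>)) = of_int \<lfloor>w * real N\<rfloor>"
      using wN by simp
    then show ?thesis by linarith
  next
    case False
    then have "real (min (N - 1) (nat \<lfloor>w * real N\<rfloor>)) = real N - 1"
      using assms(1) by (simp add: of_nat_diff)
    moreover have "real N - 1 \<le> w * real N" using False wN assms(1) by linarith
    ultimately show ?thesis using wN by linarith
  qed
qed

lemma dist_inf_le_if_same_cell:
  assumes "1 \<le> N" "x \<in> unit_cube" "y \<in> unit_cube" "cell N x = cell N y"
  shows "dist_inf x y \<le> 1 / real N"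
proof -
  have "\<bar>x $ j - y $ j\<bar> \<le> 1 / real N" for j
  proof -
    have x: "0 \<le> x $ j" "x $ j \<le> 1" and y: "0 \<le> y $ j" "y $ j \<le> 1"
      using assms(2,3) unfolding unit_cube_def by auto
    have same: "min (N - 1) (nat \<lfloor>x $ j * real N\<rfloor>) = min (N - 1) (nat \<lfloor>y $ j * real N\<rfloor>)"
      using arg_cong[OF assms(4), of "\<lambda>i. i $ j"] unfolding cell_def by simp
    have "\<bar>x $ j * real N - y $ j * real N\<bar> \<le> 1"
      using cell_index_bounds[OF assms(1) x] cell_index_bounds[OF assms(1) y] same by linarith
    then have "\<bar>x $ j - y $ j\<bar> * real N \<le> 1"
      unfolding left_diff_distrib[symmetric] abs_mult by simp
    then show ?thesis using assms(1) by (simp add: field_simps)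
  qed
  then show ?thesis unfolding dist_inf_def by (subst Max_le_iff) auto
qed

lemma lipschitz_target_range:
  "lipschitz_target L f \<Longrightarrow> x \<in> unit_cube \<Longrightarrow> 0 \<le> f x \<and> f x \<le> L"
  unfolding lipschitz_target_def by blast

lemma lipschitz_target_same_cell:
  assumes "lipschitz_target L f" "0 \<le> L" "1 \<le> N"
    and "x \<in> unit_cube" "y \<in> unit_cube" "cell N x = cell N y"
  shows "f y \<le> f x + L / real N"
proof -
  have "\<bar>f x - f y\<bar> \<le> L * dist_inf x y"
    using assms(1,4,5) unfolding lipschitz_target_def by blast
  also have "\<dots> \<le> L * (1 / real N)"
    using dist_inf_le_if_same_cell[OF assms(3-6)] assms(2) by (rule mult_left_mono)
  finally show ?thesis by simp
qed

lemma bounded_nat_vectors_eq: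
  "{i :: nat^'d. \<forall>j. i $ j < N} = vec_lambda ` (PiE UNIV (\<lambda>_. {..<N}))"
proof (intro equalityI subsetI)
  fix i :: "nat^'d" assume "i \<in> {i. \<forall>j. i $ j < N}"
  then have "(\<lambda>j. i $ j) \<in> PiE UNIV (\<lambda>_. {..<N})" by auto
  then show "i \<in> vec_lambda ` (PiE UNIV (\<lambda>_. {..<N}))" by (rule rev_image_eqI) simp
qed auto

lemma card_bounded_nat_vectors: "card {i :: nat^'d. \<forall>j. i $ j < N} = N ^ CARD('d)"
proof -
  have "inj_on (vec_lambda :: ('d \<Rightarrow> nat) \<Rightarrow> nat^'d) (PiE UNIV (\<lambda>_. {..<N}))"
    by (rule inj_onI) (simp add: vec_lambda_inject)
  then show ?thesis unfolding bounded_nat_vectors_eq by (simp add: card_image card_PiE)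
qed

lemma range_cell_subset: "1 \<le> N \<Longrightarrow> range (cell N) \<subseteq> {i :: nat^'d. \<forall>j. i $ j < N}"
  unfolding cell_def by auto

lemma finite_bounded_nat_vectors: "finite {i :: nat^'d. \<forall>j. i $ j < N}"
  unfolding bounded_nat_vectors_eq by (intro finite_imageI finite_PiE) auto

lemma finite_range_cell: "1 \<le> N \<Longrightarrow> finite (range (cell N :: real^'d \<Rightarrow> nat^'d))"
  using finite_bounded_nat_vectors range_cell_subset by (rule finite_subset[rotated])

lemma card_range_cell_le: "1 \<le> N \<Longrightarrow> card (range (cell N :: real^'d \<Rightarrow> nat^'d)) \<le> N ^ CARD('d)"
  using card_mono[OF finite_bounded_nat_vectors range_cell_subset]
  by (simp add: card_bounded_nat_vectors)

section \<open>Potential analysis of Algorithm 3\<close>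

locale algorithm3_analysis =
  fixes L eta0 tau0 :: real and N :: nat and f :: "real^'d \<Rightarrow> real"
  assumes L_pos: "0 < L" and eta0_pos: "0 < eta0" and tau0_ge_1: "1 \<le> tau0"
    and N_eta0: "1 \<le> real N * eta0" and target: "lipschitz_target L f"
begin

lemma N_ge_1: "1 \<le> N"
  using N_eta0 by (cases N) auto

lemma L_div_N_pos: "0 < L / real N"
  using L_pos N_ge_1 by simp

lemma L_div_N_le: "L / real N \<le> L * eta0"
  using N_eta0 N_ge_1 L_pos by (simp add: field_simps)

definition ready_width :: real where
  "ready_width = 10 * L * eta0"

lemma ready_width_pos: "0 < ready_width"
  using L_pos eta0_pos unfolding ready_width_def by simp

lemma ready_width_le: "ready_width \<le> l \<Longrightarrow> 10 * (L / real N) \<le> l"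
  using L_div_N_le unfolding ready_width_def by linarith

definition cell_points :: "nat^'d \<Rightarrow> (real^'d) set" where
  "cell_points j = {x \<in> unit_cube. cell N x = j}"

lemma cell_points_range: "x \<in> cell_points j \<Longrightarrow> 0 \<le> f x \<and> f x \<le> L"
  using lipschitz_target_range[OF target] unfolding cell_points_def by blast

lemma cell_points_close: "x \<in> cell_points j \<Longrightarrow> y \<in> cell_points j \<Longrightarrow> f y \<le> f x + L / real N"
  using lipschitz_target_same_cell[OF target _ N_ge_1] L_pos unfolding cell_points_def by auto

text \<open>An upper bound on the number of further searching rounds (each shrinking the range
  to at most 3/5 of its length) before a range of length l becomes pricing-ready.\<close>
definition search_rank :: "real \<Rightarrow> real" where
  "search_rank l = (if l < ready_width then 0 else log (5/3) (l / ready_width) + 1)"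

definition search_budget :: real where
  "search_budget = search_rank L + 1"

lemma search_rank_nonneg: "0 \<le> search_rank l"
  unfolding search_rank_def using ready_width_pos by auto

lemma search_rank_ge_1: "ready_width \<le> l \<Longrightarrow> 1 \<le> search_rank l"
  unfolding search_rank_def using ready_width_pos by auto

lemma search_rank_mono: "l \<le> l' \<Longrightarrow> search_rank l \<le> search_rank l'"
  unfolding search_rank_def using ready_width_pos
  by (auto intro: log_mono divide_right_mono)

lemma search_rank_shrink:
  assumes "ready_width \<le> l" "l' \<le> 3/5 * l"
  shows "search_rank l' \<le> search_rank l - 1"
proof (cases "l' < ready_width")
  case True
  then show ?thesis using search_rank_ge_1[OF assms(1)] unfolding search_rank_def by simp
next
  case False
  have "log (5/3) (l' / ready_width) \<le> log (5/3) ((l / ready_width) / (5/3))"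
    using False assms ready_width_pos by (intro log_mono) (auto simp: field_simps)
  also have "\<dots> = log (5/3) (l / ready_width) - 1"
    using assms ready_width_pos by (subst log_divide_pos) auto
  finally show ?thesis using False assms unfolding search_rank_def by simp
qed

lemma search_budget_ge_1: "1 \<le> search_budget"
  using search_rank_nonneg unfolding search_budget_def by simp

lemma search_budget_le:
  assumes "eta0 \<le> 1"
  shows "search_budget \<le> 5/2 * ln (1 / eta0) + 2"
proof -
  have ln_eta0: "0 \<le> ln (1 / eta0)" using assms eta0_pos by simp
  have "search_rank L \<le> 5/2 * ln (1 / eta0) + 1"
  proof (cases "L < ready_width")
    case False
    have L_ratio: "L / ready_width = 1 / (10 * eta0)"
      using L_pos unfolding ready_width_def by simp
    have "ln (5/3 :: real) \<ge> 2/5"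
      using ln_le_minus_one[of "3/5 :: real"] by (simp add: ln_div)
    moreover have "0 \<le> ln (L / ready_width)" using False ready_width_pos by simp
    moreover have "ln (L / ready_width) \<le> ln (1 / eta0)"
      unfolding L_ratio using eta0_pos by (simp add: field_simps)
    ultimately have "ln (L / ready_width) / ln (5/3) \<le> ln (1 / eta0) / (2/5)"
      by (intro frac_le) auto
    then show ?thesis using False unfolding search_rank_def log_def by simp
  qed (use ln_eta0 in \<open>simp add: search_rank_def\<close>)
  then show ?thesis unfolding search_budget_def by simp
qed

text \<open>A checking round at b is surprised exactly when f x \<ge> b, so a consistent range must
  lie strictly above f unless its top is still at L.\<close>
definition range_consistent :: "nat^'d \<Rightarrow> real \<Rightarrow> real \<Rightarrow> bool" where
  "range_consistent j a b \<longleftrightarrow>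
     (\<forall>x\<in>cell_points j. a \<le> f x \<and> f x \<le> b) \<and> (L \<le> b \<or> (\<forall>x\<in>cell_points j. f x < b))"

definition range_below :: "nat^'d \<Rightarrow> real \<Rightarrow> bool" where
  "range_below j b \<longleftrightarrow> cell_points j \<noteq> {} \<and> (\<forall>x\<in>cell_points j. b < f x)"

text \<open>The five terms of the potential pay, respectively, for a searching round with a low
  value (loss up to L), for one with a high value (loss at most half the range), for a
  checking round, for pricing rounds while f lies above the whole range, and for a reset.\<close>
definition pot_rank :: "real \<Rightarrow> real \<Rightarrow> real" where
  "pot_rank a b = (if L \<le> b then L * search_budget
                  else if b - a < ready_width then 0 else L * search_rank (b - a))"

definition pot_width :: "real \<Rightarrow> real \<Rightarrow> real" where
  "pot_width a b = (if b - a < ready_width then 0 else 5/4 * (b - a))"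

definition pot_counter :: "nat \<Rightarrow> real" where
  "pot_counter c = 6 * L * min (real c) tau0 / tau0"

definition pot_below :: "nat^'d \<Rightarrow> real \<Rightarrow> nat \<Rightarrow> real" where
  "pot_below j b c = (if range_below j b then L * (tau0 + 1 - min (real c) tau0) else 0)"

definition pot_inconsistent :: "nat^'d \<Rightarrow> real \<Rightarrow> real \<Rightarrow> real" where
  "pot_inconsistent j a b = (if range_consistent j a b then 0 else L * (search_budget + 3))"

definition cell_pot :: "nat^'d \<Rightarrow> real \<Rightarrow> real \<Rightarrow> nat \<Rightarrow> real" where
  "cell_pot j a b c = pot_rank a b + pot_width a b + pot_counter c + pot_below j b c
                      + pot_inconsistent j a b"

definition clean_cost :: real where
  "clean_cost = L * (11 * eta0 + 6 / tau0)"

definition pot_max :: real where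
  "pot_max = L * (2 * search_budget + 12 + tau0)"

lemma pot_rank_nonneg: "0 \<le> pot_rank a b"
  using L_pos search_rank_nonneg search_budget_ge_1 unfolding pot_rank_def by auto

lemma pot_width_nonneg: "0 \<le> pot_width a b"
  using ready_width_pos unfolding pot_width_def by auto

lemma pot_counter_nonneg: "0 \<le> pot_counter c"
  using L_pos tau0_ge_1 unfolding pot_counter_def by auto

lemma pot_below_nonneg: "0 \<le> pot_below j b c"
  using L_pos tau0_ge_1 unfolding pot_below_def by auto

lemma pot_inconsistent_nonneg: "0 \<le> pot_inconsistent j a b"
  using L_pos search_budget_ge_1 unfolding pot_inconsistent_def by auto

lemma cell_pot_nonneg: "0 \<le> cell_pot j a b c"
  using pot_rank_nonneg pot_width_nonneg pot_counter_nonneg pot_below_nonneg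
    pot_inconsistent_nonneg
  unfolding cell_pot_def by (meson add_nonneg_nonneg)

lemma pot_inconsistent_mono:
  "(range_consistent j a b \<Longrightarrow> range_consistent j a' b')
   \<Longrightarrow> pot_inconsistent j a' b' \<le> pot_inconsistent j a b"
  using L_pos search_budget_ge_1 unfolding pot_inconsistent_def by auto

lemma clean_cost_nonneg: "0 \<le> clean_cost"
  using L_pos tau0_ge_1 eta0_pos unfolding clean_cost_def by auto

lemma cell_pot_le_pot_max:
  assumes "0 \<le> a" "a \<le> b" "b \<le> L"
  shows "cell_pot j a b c \<le> pot_max"
proof -
  have "pot_rank a b \<le> L * search_budget"
    using search_rank_mono[of "b - a" L] assms L_pos search_budget_ge_1
    unfolding pot_rank_def search_budget_def by auto
  moreover have "pot_width a b \<le> 5/4 * L" using assms unfolding pot_width_def by auto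
  moreover have "pot_counter c \<le> 6 * L"
    using L_pos tau0_ge_1 unfolding pot_counter_def by (auto simp: field_simps)
  moreover have "pot_below j b c \<le> L * (tau0 + 1)"
    using L_pos tau0_ge_1 unfolding pot_below_def by auto
  moreover have "pot_inconsistent j a b \<le> L * (search_budget + 3)"
    using L_pos search_budget_ge_1 unfolding pot_inconsistent_def by auto
  ultimately show ?thesis unfolding cell_pot_def pot_max_def using L_pos
    by (simp add: algebra_simps)
qed

lemma cell_pot_reset: "cell_pot j 0 L 0 \<le> L * search_budget + 5/4 * L"
proof -
  have "range_consistent j 0 L" "\<not> range_below j L"
    using cell_points_range unfolding range_consistent_def range_below_def by fastforce+
  then show ?thesis
    using tau0_ge_1 L_pos
    unfolding cell_pot_def pot_rank_def pot_width_def pot_counter_def pot_below_def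
      pot_inconsistent_def
    by auto
qed

lemma cell_pot_ge_if_inconsistent:
  "\<not> range_consistent j a b \<Longrightarrow> L * search_budget + 9/4 * L \<le> cell_pot j a b c"
  using pot_rank_nonneg[of a b] pot_width_nonneg[of a b] pot_counter_nonneg[of c]
    pot_below_nonneg[of j b c] L_pos
  unfolding cell_pot_def pot_inconsistent_def by (simp add: algebra_simps)

lemma pot_counter_ge_if_check:
  assumes "tau0 < real (c + 1)"
  shows "3 * L \<le> pot_counter c"
proof -
  have "tau0 < 2 * real c" using assms tau0_ge_1 by (cases c) auto
  then have "1/2 \<le> min (real c) tau0 / tau0"
    using assms tau0_ge_1 by (auto simp: field_simps min_def)
  then have "6 * L * (1/2) \<le> 6 * L * (min (real c) tau0 / tau0)"
    using L_pos by (intro mult_left_mono) auto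
  then show ?thesis unfolding pot_counter_def by simp
qed

lemma reset_affordable:
  assumes "L * search_budget + 9/4 * L \<le> cell_pot j a b c" "loss \<le> L"
  shows "loss + cell_pot j 0 L 0 \<le> cell_pot j a b c + clean_cost"
  using cell_pot_reset[of j] assms clean_cost_nonneg by linarith

context
  fixes x j and a b :: real
  assumes x: "x \<in> cell_points j" and a_nonneg: "0 \<le> a" and a_le_b: "a \<le> b" and b_le_L: "b \<le> L"
begin

lemma f_x_le_L: "f x \<le> L"
  using cell_points_range[OF x] by simp

lemma searching_round_low:
  assumes ready: "ready_width \<le> b - a" and low: "f x < (a + b) / 2"
  shows "pricing_loss ((a + b) / 2) (f x) + cell_pot j a (min b ((a + b) / 2 + L / real N)) c
         \<le> cell_pot j a b c + clean_cost"
proof -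
  define q where "q = (a + b) / 2"
  define b' where "b' = min b (q + L / real N)"
  have loss: "pricing_loss q (f x) = f x" using low unfolding pricing_loss_def q_def by auto
  have b'_le: "b' \<le> q + L / real N" "b' \<le> b" unfolding b'_def by simp_all
  have q2: "2 * q = a + b" unfolding q_def by simp
  have "a \<le> b'" unfolding b'_def using a_le_b q2 L_div_N_pos by simp
  then have shrink: "b' - a \<le> 3/5 * (b - a)" "0 \<le> b' - a"
    using b'_le ready_width_le[OF ready] q2 by argo+
  have rank: "pot_rank a b' \<le> pot_rank a b - L"
  proof (cases "L \<le> b")
    case True
    then have "b' < L" using b_le_L b'_le(1) q2 ready_width_le[OF ready] L_div_N_pos by argo
    moreover have "search_rank (b' - a) \<le> search_budget - 1"
      using search_rank_mono[of "b' - a" L] shrink a_nonneg b_le_L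
      unfolding search_budget_def by simp
    ultimately have "pot_rank a b' \<le> L * (search_budget - 1)"
      using L_pos search_budget_ge_1 unfolding pot_rank_def by (auto intro: mult_left_mono)
    then show ?thesis using True unfolding pot_rank_def by (simp add: algebra_simps)
  next
    case False
    have "search_rank (b' - a) \<le> search_rank (b - a) - 1"
      using search_rank_shrink[OF ready shrink(1)] .
    then have "pot_rank a b' \<le> L * (search_rank (b - a) - 1)"
      using False shrink L_pos search_rank_nonneg[of "b - a"] search_rank_ge_1[OF ready]
      unfolding pot_rank_def by (auto intro: mult_left_mono)
    then show ?thesis using False ready unfolding pot_rank_def by (simp add: algebra_simps)
  qed
  have width: "pot_width a b' \<le> pot_width a b"
    using shrink ready unfolding pot_width_def by auto
  have below: "pot_below j b' c \<le> pot_below j b c"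
  proof -
    have "f x < b'" using low a_le_b q2 L_div_N_pos unfolding b'_def q_def[symmetric] by simp
    then have "\<not> range_below j b'" using x unfolding range_below_def by force
    then show ?thesis using pot_below_nonneg[of j b c] unfolding pot_below_def by simp
  qed
  have consistent: "pot_inconsistent j a b' \<le> pot_inconsistent j a b"
  proof (rule pot_inconsistent_mono)
    assume consistent: "range_consistent j a b"
    have "f y < b'" if "y \<in> cell_points j" "b' < b" for y
      using cell_points_close[OF x that(1)] low that(2) unfolding b'_def q_def[symmetric] by auto
    then show "range_consistent j a b'"
      using consistent b'_le(2) unfolding range_consistent_def by (force simp: order.order_iff_strict)
  qed
  have "pricing_loss q (f x) + cell_pot j a b' c \<le> cell_pot j a b c + clean_cost"
    using loss f_x_le_L rank width below consistent clean_cost_nonneg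
    unfolding cell_pot_def by linarith
  then show ?thesis unfolding q_def b'_def .
qed

lemma searching_round_high:
  assumes ready: "ready_width \<le> b - a" and high: "\<not> f x < (a + b) / 2"
  shows "pricing_loss ((a + b) / 2) (f x) + cell_pot j (max a ((a + b) / 2 - L / real N)) b c
         \<le> cell_pot j a b c + clean_cost"
proof -
  define q where "q = (a + b) / 2"
  define a' where "a' = max a (q - L / real N)"
  have q2: "2 * q = a + b" unfolding q_def by simp
  have high_q: "q \<le> f x" using high unfolding q_def by simp
  have loss: "pricing_loss q (f x) = f x - q" using high_q unfolding pricing_loss_def by auto
  have a'_ge: "q - L / real N \<le> a'" "a \<le> a'" unfolding a'_def by simp_all
  have "a' \<le> b" unfolding a'_def using a_le_b q2 L_div_N_pos by simp
  then have shrink: "b - a' \<le> 3/5 * (b - a)" "0 \<le> b - a'"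
    using a'_ge ready_width_le[OF ready] q2 by argo+
  have rank_width: "pricing_loss q (f x) + pot_rank a' b + pot_width a' b
                    \<le> pot_rank a b + pot_width a b"
  proof (cases "L \<le> b")
    case True
    have "pot_width a' b \<le> 5/4 * (3/5 * (b - a))" using shrink unfolding pot_width_def by auto
    moreover have "pot_width a b = 5/4 * (b - a)" using ready unfolding pot_width_def by simp
    moreover have "pot_rank a' b = pot_rank a b" using True unfolding pot_rank_def by simp
    moreover have "pricing_loss q (f x) \<le> (b - a) / 2" using loss f_x_le_L True b_le_L q2 by simp
    ultimately show ?thesis by simp
  next
    case False
    have "search_rank (b - a') \<le> search_rank (b - a) - 1"
      using search_rank_shrink[OF ready shrink(1)] .
    then have "pot_rank a' b \<le> L * (search_rank (b - a) - 1)"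
      using False L_pos search_rank_nonneg[of "b - a"] search_rank_ge_1[OF ready]
      unfolding pot_rank_def by (auto intro: mult_left_mono)
    moreover have "pot_rank a b = L * search_rank (b - a)"
      using False ready unfolding pot_rank_def by simp
    moreover have "pot_width a' b \<le> pot_width a b"
      using shrink ready unfolding pot_width_def by auto
    moreover have "pricing_loss q (f x) \<le> L" using loss f_x_le_L a_le_b a_nonneg q2 by simp
    ultimately show ?thesis by (simp add: algebra_simps)
  qed
  have consistent: "pot_inconsistent j a' b \<le> pot_inconsistent j a b"
  proof (rule pot_inconsistent_mono)
    assume consistent: "range_consistent j a b"
    have "a' \<le> f y" if "y \<in> cell_points j" for y
      using cell_points_close[OF that x] high_q consistent that
      unfolding a'_def range_consistent_def by auto
    then show "range_consistent j a' b"
      using consistent unfolding range_consistent_def by auto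
  qed
  have "pricing_loss q (f x) + cell_pot j a' b c \<le> cell_pot j a b c + clean_cost"
    using rank_width consistent clean_cost_nonneg unfolding cell_pot_def by linarith
  then show ?thesis unfolding q_def a'_def .
qed

lemma pricing_round_surprised:
  assumes low: "f x < a"
  shows "pricing_loss a (f x) + cell_pot j 0 L 0 \<le> cell_pot j a b c + clean_cost"
proof (rule reset_affordable)
  have "\<not> range_consistent j a b" using x low unfolding range_consistent_def by force
  then show "L * search_budget + 9/4 * L \<le> cell_pot j a b c"
    by (rule cell_pot_ge_if_inconsistent)
  show "pricing_loss a (f x) \<le> L" using pricing_loss_le a_nonneg f_x_le_L by simp
qed

lemma pricing_round:
  assumes ready: "b - a < ready_width" and is_pricing: "\<not> tau0 < real (c + 1)"
    and high: "\<not> f x < a"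
  shows "pricing_loss a (f x) + cell_pot j a b (c + 1) \<le> cell_pot j a b c + clean_cost"
proof -
  have loss: "pricing_loss a (f x) = f x - a" using high unfolding pricing_loss_def by auto
  have counter: "pot_counter (c + 1) = pot_counter c + 6 * L / tau0"
    using is_pricing tau0_ge_1 unfolding pot_counter_def by (simp add: field_simps)
  show ?thesis
  proof (cases "range_below j b")
    case True
    have "pot_below j b (c + 1) = pot_below j b c - L"
      using True is_pricing unfolding pot_below_def by (simp add: algebra_simps)
    moreover have "pricing_loss a (f x) \<le> L" using loss f_x_le_L a_nonneg by simp
    moreover have "6 * L / tau0 \<le> clean_cost"
      using L_pos eta0_pos unfolding clean_cost_def by (simp add: algebra_simps)
    ultimately show ?thesis using counter unfolding cell_pot_def by simp
  next
    case False
    then obtain y where y: "y \<in> cell_points j" "f y \<le> b"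
      using x unfolding range_below_def by force
    have "f x - a \<le> b - a + L * eta0"
      using cell_points_close[OF y(1) x] y(2) L_div_N_le by linarith
    then have "pricing_loss a (f x) \<le> 11 * L * eta0"
      using loss ready unfolding ready_width_def by linarith
    moreover have "pot_below j b (c + 1) = pot_below j b c"
      using False unfolding pot_below_def by simp
    ultimately show ?thesis
      using counter unfolding cell_pot_def clean_cost_def by (simp add: algebra_simps)
  qed
qed

lemma checking_round:
  assumes is_check: "tau0 < real (c + 1)" and low: "f x < b"
  shows "pricing_loss b (f x) + cell_pot j a b 0 \<le> cell_pot j a b c + clean_cost"
proof -
  have "pricing_loss b (f x) \<le> L" using pricing_loss_le a_nonneg a_le_b f_x_le_L by simp
  moreover have "3 * L \<le> pot_counter c" using pot_counter_ge_if_check[OF is_check] .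
  moreover have "pot_counter 0 = 0" unfolding pot_counter_def using tau0_ge_1 by simp
  moreover have "\<not> range_below j b" using x low unfolding range_below_def by force
  ultimately show ?thesis
    using clean_cost_nonneg L_pos unfolding cell_pot_def pot_below_def by simp
qed

lemma checking_round_surprised:
  assumes is_check: "tau0 < real (c + 1)" and high: "\<not> f x < b"
  shows "pricing_loss b (f x) + cell_pot j 0 L 0 \<le> cell_pot j a b c + clean_cost"
proof (rule reset_affordable)
  show "pricing_loss b (f x) \<le> L" using pricing_loss_le a_nonneg a_le_b f_x_le_L by simp
  show "L * search_budget + 9/4 * L \<le> cell_pot j a b c"
  proof (cases "range_consistent j a b")
    case True
    then have "L \<le> b" using high x unfolding range_consistent_def by force
    then have "pot_rank a b = L * search_budget" unfolding pot_rank_def by simp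
    then show ?thesis
      using pot_counter_ge_if_check[OF is_check] pot_width_nonneg[of a b]
        pot_below_nonneg[of j b c] pot_inconsistent_nonneg[of j a b] L_pos
      unfolding cell_pot_def by linarith
  qed (rule cell_pot_ge_if_inconsistent)
qed

end

definition valid_state :: "'d alg_state \<Rightarrow> bool" where
  "valid_state st \<longleftrightarrow>
     (\<forall>j. 0 \<le> fst (fst st j) \<and> fst (fst st j) \<le> snd (fst st j) \<and> snd (fst st j) \<le> L)"

definition state_pot :: "'d alg_state \<Rightarrow> nat^'d \<Rightarrow> real" where
  "state_pot st j = cell_pot j (fst (fst st j)) (snd (fst st j)) (snd st j)"

lemma valid_state_init: "valid_state (alg_init L)"
  unfolding valid_state_def alg_init_def using L_pos by simp

lemma valid_state_update:
  assumes valid: "valid_state st"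
  shows "valid_state (alg_update L eta0 tau0 N st x s)"
proof -
  obtain Y c where st: "st = (Y, c)" by fastforce
  obtain a b where Yj: "Y (cell N x) = (a, b)" by fastforce
  have ab: "0 \<le> a" "a \<le> b" "b \<le> L"
    using valid unfolding valid_state_def st by (metis Yj fst_conv snd_conv)+
  have "a \<le> (a + b) / 2" "(a + b) / 2 \<le> b" using ab by simp_all
  moreover note L_div_N_pos
  ultimately have "a \<le> (a + b) / 2 + L / real N" "(a + b) / 2 - L / real N \<le> b" by linarith+
  then show ?thesis
    using valid ab L_pos unfolding valid_state_def alg_update_def st Let_def by (auto simp: Yj)
qed

lemma state_pot_update_other:
  "i \<noteq> cell N x \<Longrightarrow> state_pot (alg_update L eta0 tau0 N st x s) i = state_pot st i"
  unfolding alg_update_def state_pot_def Let_def by (auto split: prod.splits)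

lemma clean_round:
  assumes valid: "valid_state st" and x: "x \<in> unit_cube"
  defines "q \<equiv> alg_guess L eta0 tau0 N st x"
  shows "pricing_loss q (f x) + state_pot (alg_update L eta0 tau0 N st x (feedback f x False q)) (cell N x)
         \<le> state_pot st (cell N x) + clean_cost"
proof -
  obtain Y c where st: "st = (Y, c)" by fastforce
  define j where "j = cell N x"
  obtain a b where Yj: "Y j = (a, b)" by fastforce
  have x_j: "x \<in> cell_points j" unfolding cell_points_def j_def using x by simp
  have ab: "0 \<le> a" "a \<le> b" "b \<le> L"
    using valid unfolding valid_state_def st by (metis Yj fst_conv snd_conv)+
  note round_simps = q_def alg_guess_def alg_update_def state_pot_def feedback_def sgn01_def
    Let_def st j_def[symmetric] Yj ready_width_def[symmetric]
  consider (search) "ready_width \<le> b - a"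
    | (price) "b - a < ready_width" "\<not> tau0 < real (c j + 1)"
    | (check) "b - a < ready_width" "tau0 < real (c j + 1)"
    by linarith
  then show ?thesis
  proof cases
    case search
    then show ?thesis
      using searching_round_low[OF x_j ab search] searching_round_high[OF x_j ab search] ab
      by (cases "f x < (a + b) / 2") (simp_all add: round_simps)
  next
    case price
    then show ?thesis
      using pricing_round_surprised[OF x_j ab] pricing_round[OF x_j ab price]
      by (cases "f x < a") (simp_all add: round_simps)
  next
    case check
    then show ?thesis
      using checking_round[OF x_j ab check(2)] checking_round_surprised[OF x_j ab check(2)]
      by (cases "f x < b") (simp_all add: round_simps)
  qed
qed

lemma alg_guess_nonneg:
  assumes "valid_state st"
  shows "0 \<le> alg_guess L eta0 tau0 N st x"
proof -
  define a b where "a = fst (fst st (cell N x))" and "b = snd (fst st (cell N x))"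
  have "0 \<le> a" "a \<le> b" using assms unfolding valid_state_def a_def b_def by auto
  then show ?thesis unfolding alg_guess_def Let_def a_def[symmetric] b_def[symmetric] by auto
qed

lemma corrupted_round:
  assumes valid: "valid_state st" and x: "x \<in> unit_cube"
  defines "q \<equiv> alg_guess L eta0 tau0 N st x"
  shows "pricing_loss q (f x) + state_pot (alg_update L eta0 tau0 N st x s) (cell N x)
         \<le> state_pot st (cell N x) + (L + pot_max)"
proof -
  have "pricing_loss q (f x) \<le> L"
    using pricing_loss_le alg_guess_nonneg[OF valid] lipschitz_target_range[OF target x]
    unfolding q_def by simp
  moreover have "state_pot (alg_update L eta0 tau0 N st x s) (cell N x) \<le> pot_max"
    using valid_state_update[OF valid] cell_pot_le_pot_max
    unfolding valid_state_def state_pot_def by blast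
  moreover have "0 \<le> state_pot st (cell N x)"
    using cell_pot_nonneg unfolding state_pot_def by simp
  ultimately show ?thesis by linarith
qed

definition total_pot :: "'d alg_state \<Rightarrow> real" where
  "total_pot st = (\<Sum>j\<in>range (cell N). state_pot st j)"

lemma total_pot_nonneg: "0 \<le> total_pot st"
  unfolding total_pot_def state_pot_def using cell_pot_nonneg by (simp add: sum_nonneg)

lemma total_pot_init:
  "total_pot (alg_init L) \<le> real (N ^ CARD('d)) * (L * search_budget + 5/4 * L)"
proof -
  have "total_pot (alg_init L) \<le> (\<Sum>j\<in>range (cell N :: real^'d \<Rightarrow> _). L * search_budget + 5/4 * L)"
    unfolding total_pot_def state_pot_def alg_init_def by (simp only: fst_conv snd_conv)
      (intro sum_mono cell_pot_reset)
  also have "\<dots> \<le> real (N ^ CARD('d)) * (L * search_budget + 5/4 * L)"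
    using card_range_cell_le[OF N_ge_1, where 'd = 'd] L_pos search_budget_ge_1
    by (simp add: mult_right_mono)
  finally show ?thesis .
qed

lemma total_pot_round:
  fixes cr :: bool
  assumes valid: "valid_state st" and x: "x \<in> unit_cube"
  defines "q \<equiv> alg_guess L eta0 tau0 N st x"
  defines "st' \<equiv> alg_update L eta0 tau0 N st x (feedback f x cr q)"
  shows "pricing_loss q (f x) + total_pot st' \<le> total_pot st + (if cr then L + pot_max else clean_cost)"
proof -
  define j where "j = cell N x"
  have "j \<in> range (cell N)" unfolding j_def by simp
  then have split: "total_pot st'' = state_pot st'' j + (\<Sum>i\<in>range (cell N) - {j}. state_pot st'' i)"
    for st'' unfolding total_pot_def using finite_range_cell[OF N_ge_1] by (intro sum.remove)
  have "(\<Sum>i\<in>range (cell N) - {j}. state_pot st' i) = (\<Sum>i\<in>range (cell N) - {j}. state_pot st i)"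
    using state_pot_update_other unfolding st'_def j_def by (intro sum.cong) auto
  moreover have "pricing_loss q (f x) + state_pot st' j
                 \<le> state_pot st j + (if cr then L + pot_max else clean_cost)"
    using clean_round[OF valid x] corrupted_round[OF valid x]
    unfolding q_def st'_def j_def by (cases cr) auto
  ultimately show ?thesis unfolding split[of st] split[of st'] by linarith
qed

lemma valid_state_run: "valid_state (alg_run L eta0 tau0 N f xs cor n)"
  by (induction n) (simp_all add: valid_state_init valid_state_update Let_def)

lemma loss_plus_pot_run:
  assumes "\<forall>t<n. xs t \<in> unit_cube"
  shows "(\<Sum>t<n. pricing_loss (alg_guess L eta0 tau0 N (alg_run L eta0 tau0 N f xs cor t) (xs t))
                              (f (xs t)))
         + total_pot (alg_run L eta0 tau0 N f xs cor n)
         \<le> total_pot (alg_init L) + (\<Sum>t<n. if cor t then L + pot_max else clean_cost)"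
  using assms
proof (induction n)
  case (Suc n)
  have "xs n \<in> unit_cube" using Suc.prems by simp
  from total_pot_round[OF valid_state_run this, of xs cor n "cor n"] Suc show ?case
    by (simp add: Let_def)
qed simp

lemma cumulative_loss_le:
  assumes "\<forall>t<T. xs t \<in> unit_cube" "card {t. t < T \<and> cor t} \<le> C"
  shows "(\<Sum>t<T. pricing_loss (alg_guess L eta0 tau0 N (alg_run L eta0 tau0 N f xs cor t) (xs t))
                              (f (xs t)))
         \<le> real (N ^ CARD('d)) * (L * search_budget + 5/4 * L) + real T * clean_cost
            + real C * (L + pot_max)"
proof -
  have "0 \<le> L + pot_max"
    using L_pos search_budget_ge_1 tau0_ge_1 unfolding pot_max_def by simp
  then have "(\<Sum>t<T. if cor t then L + pot_max else clean_cost)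
             \<le> real T * clean_cost + real C * (L + pot_max)"
    using clean_cost_nonneg assms(2) by (rule sum_if_le_card)
  then show ?thesis
    using loss_plus_pot_run[OF assms(1), of cor] total_pot_init
      total_pot_nonneg[of "alg_run L eta0 tau0 N f xs cor T"] by linarith
qed

lemma cumulative_loss_le_ln:
  assumes "eta0 \<le> 1" "ln (1 / eta0) \<le> l" "1/2 \<le> l"
    and "\<forall>t<T. xs t \<in> unit_cube" "card {t. t < T \<and> cor t} \<le> C"
  shows "(\<Sum>t<T. pricing_loss (alg_guess L eta0 tau0 N (alg_run L eta0 tau0 N f xs cor t) (xs t))
                              (f (xs t)))
         \<le> L * (9 * real (N ^ CARD('d)) * l + 22 * (real T * eta0) * l + 39 * real C * l
                + real C * tau0 + 6 * (real T / tau0))"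
proof -
  have budget: "search_budget \<le> 13/2 * l"
    using search_budget_le[OF assms(1)] assms(2,3) by linarith
  have "(L * real (N ^ CARD('d))) * (search_budget + 5/4) \<le> (L * real (N ^ CARD('d))) * (9 * l)"
    using budget assms(3) L_pos by (intro mult_left_mono) auto
  moreover have "(L * real T * eta0) * 11 \<le> (L * real T * eta0) * (22 * l)"
    using assms(3) L_pos eta0_pos by (intro mult_left_mono) auto
  moreover have "(L * real C) * (2 * search_budget + 13) \<le> (L * real C) * (39 * l)"
    using budget assms(3) L_pos by (intro mult_left_mono) auto
  ultimately have "real (N ^ CARD('d)) * (L * search_budget + 5/4 * L) + real T * clean_cost
                   + real C * (L + pot_max)
                   \<le> L * (9 * real (N ^ CARD('d)) * l + 22 * (real T * eta0) * l + 39 * real C * l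
                          + real C * tau0 + 6 * (real T / tau0))"
    unfolding clean_cost_def pot_max_def by (simp add: algebra_simps)
  then show ?thesis using cumulative_loss_le[OF assms(4,5)] by linarith
qed

end

section \<open>The parameter choice\<close>

lemma eta0_of_eq: "0 < T \<Longrightarrow> eta0_of d T = 1 / real T powr (1 / (real d + 1))"
  unfolding eta0_of_def by (simp add: powr_minus_divide flip: minus_divide_left)

lemma N_of_bounds:
  assumes "0 < T"
  shows "real T powr (1 / (real d + 1)) \<le> real (N_of d T)"
    and "real (N_of d T) \<le> 2 * real T powr (1 / (real d + 1))"
proof -
  define u where "u = real T powr (1 / (real d + 1))"
  have "1 \<le> u" unfolding u_def using assms by (intro ge_one_powr_ge_zero) auto
  moreover have "real (N_of d T) = of_int \<lceil>u\<rceil>"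
    unfolding N_of_def eta0_of_eq[OF assms] u_def[symmetric] using \<open>1 \<le> u\<close> by simp
  ultimately show "u \<le> real (N_of d T)" "real (N_of d T) \<le> 2 * u" by linarith+
qed

lemma N_of_power_le:
  assumes "0 < T"
  shows "real (N_of d T ^ d) \<le> 2 ^ d * real T powr (real d / (real d + 1))"
proof -
  have "real (N_of d T ^ d) \<le> (2 * real T powr (1 / (real d + 1))) ^ d"
    unfolding of_nat_power using N_of_bounds[OF assms] by (intro power_mono) auto
  also have "\<dots> = 2 ^ d * real T powr (real d / (real d + 1))"
    using assms by (simp add: power_mult_distrib powr_power)
  finally show ?thesis .
qed

lemma T_mult_eta0_of:
  "0 < T \<Longrightarrow> real T * eta0_of d T = real T powr (real d / (real d + 1))"
proof -
  assume "0 < T"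
  have "real T * eta0_of d T = real T powr (1 + - 1 / (real d + 1))"
    unfolding eta0_of_def by (rule powr_mult_base) (use \<open>0 < T\<close> in simp)
  also have "1 + - 1 / (real d + 1) = real d / (real d + 1)" by (simp add: field_simps)
  finally show ?thesis .
qed

lemma eta0_of_le_1:
  assumes "0 < T"
  shows "eta0_of d T \<le> 1"
proof -
  have "1 \<le> real T powr (1 / (real d + 1))" using assms by (intro ge_one_powr_ge_zero) auto
  then show ?thesis using assms unfolding eta0_of_eq[OF assms] by (simp add: divide_le_eq_1)
qed

lemma ln_inverse_eta0_of_le: "0 < T \<Longrightarrow> ln (1 / eta0_of d T) \<le> ln (real T)"
  unfolding eta0_of_eq by (simp add: ln_powr divide_le_eq mult_le_cancel_left1)

lemma half_le_ln:
  assumes "2 \<le> T"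
  shows "1/2 \<le> ln (real T)"
proof -
  have "ln 2 \<le> ln (real T)" using assms by simp
  then show ?thesis using ln2_ge_two_thirds by linarith
qed

lemma le_twice_mult_ln: "0 \<le> x \<Longrightarrow> 2 \<le> T \<Longrightarrow> x \<le> 2 * (x * ln (real T))"
  using mult_left_mono[of 1 "2 * ln (real T)" x] half_le_ln[of T] by simp

lemma total_loss_le:
  fixes f :: "real^'d \<Rightarrow> real"
  assumes T: "2 \<le> T" and L: "0 < L" and target: "lipschitz_target L f"
    and xs: "\<forall>t<T. xs t \<in> unit_cube" and C: "card {t. t < T \<and> cor t} \<le> C"
    and tau0: "1 \<le> tau0"
  shows "total_loss L T tau0 f xs cor
         \<le> L * (50 * 2 ^ CARD('d)) * (real C * ln (real T)
              + real T powr (real CARD('d) / (real CARD('d) + 1)) * ln (real T)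
              + real C * tau0 + real T / tau0)"
proof -
  define d where "d = CARD('d)"
  define P where "P = real T powr (real d / (real d + 1))"
  define l where "l = ln (real T)"
  have T_pos: "0 < T" using T by simp
  have l: "1/2 \<le> l" unfolding l_def using T by (rule half_le_ln)
  interpret algorithm3_analysis L "eta0_of d T" tau0 "N_of d T" f
  proof
    show "0 < eta0_of d T" unfolding eta0_of_eq[OF T_pos] using T_pos by simp
    show "1 \<le> real (N_of d T) * eta0_of d T"
      using N_of_bounds(1)[OF T_pos, of d] T_pos unfolding eta0_of_eq[OF T_pos]
      by (simp add: le_divide_eq)
  qed (use L tau0 target in auto)
  have "total_loss L T tau0 f xs cor
        \<le> L * (9 * real (N_of d T ^ d) * l + 22 * P * l + 39 * real C * l
               + real C * tau0 + 6 * (real T / tau0))"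
    using cumulative_loss_le_ln[OF eta0_of_le_1[OF T_pos] ln_inverse_eta0_of_le[OF T_pos, folded l_def] l xs C]
    unfolding total_loss_def Let_def d_def P_def l_def T_mult_eta0_of[OF T_pos] by simp
  also have "\<dots> \<le> L * ((50 * 2 ^ d) * (real C * l + P * l + real C * tau0 + real T / tau0))"
  proof (intro mult_left_mono)
    define K :: real where "K = 50 * 2 ^ d"
    have "1 \<le> (2::real) ^ d" by simp
    then have K: "9 * 2 ^ d + 22 \<le> K" "39 \<le> K" "1 \<le> K" "6 \<le> K" unfolding K_def by linarith+
    have "(9 * 2 ^ d + 22) * (P * l) \<le> K * (P * l)"
      using K(1) l unfolding P_def by (intro mult_right_mono) auto
    then have "9 * (2 ^ d * P) * l + 22 * P * l \<le> K * (P * l)" by (simp add: algebra_simps)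
    moreover have "9 * real (N_of d T ^ d) * l \<le> 9 * (2 ^ d * P) * l"
      using N_of_power_le[OF T_pos, of d] l unfolding P_def by (intro mult_right_mono) auto
    moreover have "39 * (real C * l) \<le> K * (real C * l)"
      using K(2) l by (intro mult_right_mono) auto
    moreover have "1 * (real C * tau0) \<le> K * (real C * tau0)"
      using K(3) tau0 by (intro mult_right_mono) auto
    moreover have "6 * (real T / tau0) \<le> K * (real T / tau0)"
      using K(4) tau0 by (intro mult_right_mono) auto
    moreover have "K * (real C * l + P * l + real C * tau0 + real T / tau0)
        = K * (real C * l) + K * (P * l) + K * (real C * tau0) + K * (real T / tau0)"
      by (simp only: distrib_left)
    ultimately show "9 * real (N_of d T ^ d) * l + 22 * P * l + 39 * real C * l
                     + real C * tau0 + 6 * (real T / tau0)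
                     \<le> K * (real C * l + P * l + real C * tau0 + real T / tau0)"
      by (simp only: mult.assoc mult_1)
  qed (use L in simp)
  finally show ?thesis unfolding d_def P_def l_def by (simp only: mult.assoc)
qed

lemma total_loss_tuned_le:
  fixes f :: "real^'d \<Rightarrow> real"
  assumes T: "2 \<le> T" and L: "0 < L" and target: "lipschitz_target L f"
    and xs: "\<forall>t<T. xs t \<in> unit_cube" and C: "card {t. t < T \<and> cor t} \<le> C"
  shows "total_loss L T (real T powr (1 / (real CARD('d) + 1))) f xs cor
         \<le> L * (150 * 2 ^ CARD('d)) * (real T powr (real CARD('d) / (real CARD('d) + 1))
              + real C * real T powr (1 / (real CARD('d) + 1))) * ln (real T)"
proof -
  define d where "d = CARD('d)"
  define u where "u = real T powr (1 / (real d + 1))"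
  define P where "P = real T powr (real d / (real d + 1))"
  define l where "l = ln (real T)"
  have T_pos: "0 < T" using T by simp
  have u_ge_1: "1 \<le> u" unfolding u_def using T by (intro ge_one_powr_ge_zero) auto
  have "real T / u = P"
    using T_mult_eta0_of[OF T_pos, of d] eta0_of_eq[OF T_pos, of d] unfolding u_def P_def by simp
  moreover have "real C * l \<le> real C * u * l"
    using mult_left_mono[OF u_ge_1, of "real C * l"] half_le_ln[OF T] unfolding l_def
    by (simp add: mult_ac)
  moreover have "real C * u \<le> 2 * (real C * u * l)" "P \<le> 2 * (P * l)"
    using le_twice_mult_ln[OF _ T] u_ge_1 unfolding l_def P_def by simp_all
  ultimately have "real C * l + P * l + real C * u + real T / u \<le> 3 * ((P + real C * u) * l)"
    by (simp add: algebra_simps)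
  then have "L * (50 * 2 ^ d) * (real C * l + P * l + real C * u + real T / u)
             \<le> L * (50 * 2 ^ d) * (3 * ((P + real C * u) * l))"
    using L by (intro mult_left_mono) auto
  moreover have "total_loss L T u f xs cor
      \<le> L * (50 * 2 ^ d) * (real C * l + P * l + real C * u + real T / u)"
    using total_loss_le[OF T L target xs C u_ge_1] unfolding u_def P_def l_def d_def .
  ultimately have "total_loss L T u f xs cor \<le> L * (150 * 2 ^ d) * (P + real C * u) * l"
    by (simp add: algebra_simps)
  then show ?thesis unfolding u_def P_def l_def d_def .
qed

theorem theorem14:
  shows "\<exists>K>0. \<forall>(T::nat) (L::real) (tau0::real) (C::nat) (f :: real^'d \<Rightarrow> real)
            (xs :: nat \<Rightarrow> real^'d) (cor :: nat \<Rightarrow> bool).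
     T \<ge> 2 \<longrightarrow> L > 0 \<longrightarrow> lipschitz_target L f \<longrightarrow>
     (\<forall>t<T. xs t \<in> unit_cube) \<longrightarrow> card {t. t < T \<and> cor t} \<le> C \<longrightarrow>
     (tau0 \<ge> 1 \<longrightarrow>
        total_loss L T tau0 f xs cor
          \<le> L * K * (real C * ln (real T)
                     + real T powr (real CARD('d) / (real CARD('d) + 1)) * ln (real T)
                     + real C * tau0 + real T / tau0)) \<and>
     total_loss L T (real T powr (1 / (real CARD('d) + 1))) f xs cor
          \<le> L * K * (real T powr (real CARD('d) / (real CARD('d) + 1))
                     + real C * real T powr (1 / (real CARD('d) + 1))) * ln (real T)"
proof (intro exI[of _ "150 * 2 ^ CARD('d)"] conjI allI impI)
  fix T C :: nat and L tau0 :: real and f :: "real^'d \<Rightarrow> real"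
    and xs :: "nat \<Rightarrow> real^'d" and cor :: "nat \<Rightarrow> bool"
  assume T: "T \<ge> 2" and L: "L > 0" and target: "lipschitz_target L f"
    and xs: "\<forall>t<T. xs t \<in> unit_cube" and C: "card {t. t < T \<and> cor t} \<le> C"
  then show "total_loss L T (real T powr (1 / (real CARD('d) + 1))) f xs cor
          \<le> L * (150 * 2 ^ CARD('d)) * (real T powr (real CARD('d) / (real CARD('d) + 1))
                     + real C * real T powr (1 / (real CARD('d) + 1))) * ln (real T)"
    by (rule total_loss_tuned_le)
  assume tau0: "tau0 \<ge> 1"
  define W where "W = real C * ln (real T)
                     + real T powr (real CARD('d) / (real CARD('d) + 1)) * ln (real T)
                     + real C * tau0 + real T / tau0"
  have "0 \<le> W" unfolding W_def using T tau0 by simp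
  then have "L * (50 * 2 ^ CARD('d)) * W \<le> L * (150 * 2 ^ CARD('d)) * W"
    using L by (intro mult_right_mono) auto
  with total_loss_le[OF T L target xs C tau0]
  show "total_loss L T tau0 f xs cor \<le> L * (150 * 2 ^ CARD('d)) * W"
    unfolding W_def by linarith
qed simp

end
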